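(* Let $(D,\Gamma)$ be a consistent action theory, $n\ge 0$, and let $X$ be an answer set of the program $\pi$. If for some $t\in\{0,\dots,n\}$ the set $X$ contains no atom of the form $occ(a,t)$, then $X$ contains no atom of the form $occ(a,t')$ for any $t'$ with $t\le t'\le n$.
   Context: Action language $\mathcal{B}$: fix finite sets $\mathbf{F}$ of fluents and $\mathbf{A}$ of actions. A fluent literal is $f$ or $\neg f$ ($f\in\mathbf{F}$); the complement $\bar l$ of $f$ is $\neg f$ and of $\neg f$ is $f$. A set of fluent literals is consistent if it contains no pair $f,\neg f$; an interpretation is a maximal consistent set. For a set $u$ of literals, $u\models p_1\wedge\dots\wedge p_k$ means $\{p_1,\dots,p_k\}\subseteq u$. A domain description $D$ is a finite set of static causal laws $\mathbf{caused}(\{p_1,\dots,p_k\},f)$ (their set is $D_C$), dynamic causal laws $\mathbf{causes}(a,f,\{p_1,\dots,p_k\})$ and executability conditions $\mathbf{executable}(a,\{p_1,\dots,p_k\})$, with $a\in\mathbf{A}$ and $f,p_i$ fluent literals; $\Gamma$ is a set of propositions $\mathbf{initially}(f)$. A consistent set $u$ is closed under $D_C$ if for every $\mathbf{caused}(P,f)\in D_C$ with $P\subseteq u$, $f\in u$; $Cl_{D_C}(u)$ is the least consistent superset of $u$ closed under $D_C$ (undefined if none). A state is an interpretation closed under $D_C$. Action $a$ is executable in state $s$ if some $\mathbf{executable}(a,P)\in D$ has $P\subseteq s$. $E(a,s)=\{f\mid \mathbf{causes}(a,f,P)\in D,\ P\subseteq s\}$. $\Phi(a,s)=\{s'\mid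 s'\text{ a state},\ s'=Cl_{D_C}(E(a,s)\cup(s\cap s'))\}$ if $a$ is executable in $s$, and $\Phi(a,s)=\emptyset$ otherwise. $D$ is consistent if $\Phi(a,s)\ne\emptyset$ whenever $a$ is executable in state $s$; $(D,\Gamma)$ is consistent if $D$ is consistent and $s_0^\Gamma:=\{f\mid\mathbf{initially}(f)\in\Gamma\}$ is a state of $D$. Answer sets: a ground normal program consists of rules $h\leftarrow b_1,\dots,b_m,\mathit{not}\,c_1,\dots,\mathit{not}\,c_r$ and constraints $\bot\leftarrow b_1,\dots,b_m,\mathit{not}\,c_1,\dots,\mathit{not}\,c_r$. For a set $S$ of atoms, the reduct $\Pi^S$ deletes every rule/constraint containing $\mathit{not}\,c$ with $c\in S$ and deletes all $\mathit{not}$-literals from the rest; $S$ is an answer set of $\Pi$ if $S$ is the least set of atoms closed under the non-constraint rules of $\Pi^S$ and no constraint of $\Pi^S$ has its whole body contained in $S$. The program $\pi$ (ground; $t$ ranges over $\{0,\dots,n\}$ unless stated): (1) $holds(l,0)\leftarrow$ for each $\mathbf{initially}(l)\in\Gamma$; (2) $possible(a,t)\leftarrow holds(p_1,t),\dots,holds(p_k,t)$ for each $\mathbf{executable}(a,\{p_1,\dots,p_k\})\in D$; (3) for $t\in\{0,\dots,n-1\}$, $holds(f,t+1)\leftarrow occ(a,t),possible(a,t),holds(p_1,t),\dots,holds(p_k,t)$ for each $\mathbf{causes}(a,f,\{p_1,\dots,p_k\})\in D$; (4) $holds(f,t)\leftarrow holds(p_1,t),\dots,holds(p_k,t)$ for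 each $\mathbf{caused}(\{p_1,\dots,p_k\},f)\in D$; (5) $occ(a,t)\leftarrow possible(a,t),\mathit{not}\,nocc(a,t)$ for each action $a$; (6) $nocc(a,t)\leftarrow occ(b,t)$ for each pair of distinct actions $a\ne b$; (7) for $t\in\{0,\dots,n-1\}$, $holds(l,t+1)\leftarrow holds(l,t),\mathit{not}\,holds(\bar l,t+1)$ for each fluent literal $l$; (8) $\bot\leftarrow holds(f,t),holds(\neg f,t)$ for each fluent $f$. *)

theory Defs
  imports Main
begin

datatype 'f lit = Pos 'f | Neg 'f

fun compl :: "'f lit \<Rightarrow> 'f lit" where
  "compl (Pos f) = Neg f"
| "compl (Neg f) = Pos f"

text \<open>A domain description: static causal laws caused(P,f) as (P,f),
  dynamic causal laws causes(a,f,P) as (a,f,P), executability conditions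
  executable(a,P) as (a,P).\<close>
record ('f, 'a) domain =
  static :: "('f lit set \<times> 'f lit) set"
  dynamic :: "('a \<times> 'f lit \<times> 'f lit set) set"
  exec :: "('a \<times> 'f lit set) set"

definition consistent_lits :: "'f lit set \<Rightarrow> bool" where
  "consistent_lits u \<longleftrightarrow> (\<forall>f. \<not> (Pos f \<in> u \<and> Neg f \<in> u))"

definition interpretation_lits :: "'f lit set \<Rightarrow> bool" where
  "interpretation_lits u \<longleftrightarrow> consistent_lits u \<and>
     (\<forall>v. consistent_lits v \<and> u \<subseteq> v \<longrightarrow> v = u)"

definition closed_under :: "('f lit set \<times> 'f lit) set \<Rightarrow> 'f lit set \<Rightarrow> bool" where
  "closed_under DC u \<longleftrightarrow> consistent_lits u \<and> (\<forall>(P, f) \<in> DC. P \<subseteq> u \<longrightarrow> f \<in> u)"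

text \<open>is_Cl DC u v: v is Cl_{D_C}(u), the least consistent superset of u closed
  under DC (no such v exists when Cl is undefined).\<close>
definition is_Cl :: "('f lit set \<times> 'f lit) set \<Rightarrow> 'f lit set \<Rightarrow> 'f lit set \<Rightarrow> bool" where
  "is_Cl DC u v \<longleftrightarrow> u \<subseteq> v \<and> closed_under DC v \<and>
     (\<forall>w. u \<subseteq> w \<and> closed_under DC w \<longrightarrow> v \<subseteq> w)"

definition is_state :: "('f, 'a) domain \<Rightarrow> 'f lit set \<Rightarrow> bool" where
  "is_state D s \<longleftrightarrow> interpretation_lits s \<and> closed_under (static D) s"

definition executable_in :: "('f, 'a) domain \<Rightarrow> 'a \<Rightarrow> 'f lit set \<Rightarrow> bool" where
  "executable_in D a s \<longleftrightarrow> (\<exists>P. (a, P) \<in> exec D \<and> P \<subseteq> s)"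

definition E_eff :: "('f, 'a) domain \<Rightarrow> 'a \<Rightarrow> 'f lit set \<Rightarrow> 'f lit set" where
  "E_eff D a s = {f. \<exists>P. (a, f, P) \<in> dynamic D \<and> P \<subseteq> s}"

definition Phi :: "('f, 'a) domain \<Rightarrow> 'a \<Rightarrow> 'f lit set \<Rightarrow> 'f lit set set" where
  "Phi D a s = (if executable_in D a s
      then {s'. is_state D s' \<and> is_Cl (static D) (E_eff D a s \<union> (s \<inter> s')) s'}
      else {})"

definition consistent_domain :: "('f, 'a) domain \<Rightarrow> bool" where
  "consistent_domain D \<longleftrightarrow> (\<forall>a s. is_state D s \<and> executable_in D a s \<longrightarrow> Phi D a s \<noteq> {})"

text \<open>\<Gamma> is represented by the set of literals l with initially(l) \<in> \<Gamma>; thus s0 = \<Gamma>.\<close>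
definition consistent_theory :: "('f, 'a) domain \<Rightarrow> 'f lit set \<Rightarrow> bool" where
  "consistent_theory D \<Gamma> \<longleftrightarrow> consistent_domain D \<and> is_state D \<Gamma>"

datatype ('f, 'a) atom =
  Holds "'f lit" nat | Possible 'a nat | Occ 'a nat | Nocc 'a nat

text \<open>A rule (h, B, C): head h (None for a constraint), positive body B,
  negative body C (the atoms under not).\<close>
type_synonym 'at rule = "'at option \<times> 'at set \<times> 'at set"

definition reduct :: "'at rule set \<Rightarrow> 'at set \<Rightarrow> ('at option \<times> 'at set) set" where
  "reduct \<Pi> S = {(h, B). \<exists>C. (h, B, C) \<in> \<Pi> \<and> C \<inter> S = {}}"

definition closed_rules :: "('at option \<times> 'at set) set \<Rightarrow> 'at set \<Rightarrow> bool" where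
  "closed_rules R M \<longleftrightarrow> (\<forall>h B. (Some h, B) \<in> R \<and> B \<subseteq> M \<longrightarrow> h \<in> M)"

definition answer_set :: "'at rule set \<Rightarrow> 'at set \<Rightarrow> bool" where
  "answer_set \<Pi> S \<longleftrightarrow>
     closed_rules (reduct \<Pi> S) S \<and>
     (\<forall>M. closed_rules (reduct \<Pi> S) M \<longrightarrow> S \<subseteq> M) \<and>
     (\<forall>B. (None, B) \<in> reduct \<Pi> S \<longrightarrow> \<not> B \<subseteq> S)"

definition pi_prog :: "('f, 'a) domain \<Rightarrow> 'f lit set \<Rightarrow> nat \<Rightarrow> ('f, 'a) atom rule set" where
  "pi_prog D \<Gamma> n =
     {(Some (Holds l 0), {}, {}) | l. l \<in> \<Gamma>}
   \<union> {(Some (Possible a t), (\<lambda>p. Holds p t) ` P, {}) | a P t. (a, P) \<in> exec D \<and> t \<le> n}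
   \<union> {(Some (Holds f (Suc t)), {Occ a t, Possible a t} \<union> (\<lambda>p. Holds p t) ` P, {})
        | a f P t. (a, f, P) \<in> dynamic D \<and> t < n}
   \<union> {(Some (Holds f t), (\<lambda>p. Holds p t) ` P, {}) | P f t. (P, f) \<in> static D \<and> t \<le> n}
   \<union> {(Some (Occ a t), {Possible a t}, {Nocc a t}) | a t. t \<le> n}
   \<union> {(Some (Nocc a t), {Occ b t}, {}) | a b t. a \<noteq> b \<and> t \<le> n}
   \<union> {(Some (Holds l (Suc t)), {Holds l t}, {Holds (compl l) (Suc t)}) | l t. t < n}
   \<union> {(None, {Holds (Pos f) t, Holds (Neg f) t}, {}) | f t. t \<le> n}"

end

theory Submission
  imports Defs
begin

text \<open>Suppose no action occurs at a step s < n. Then every literal holding at s + 1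
  already holds at s: it can only be supported by inertia or by a static law at s + 1,
  and the literals new at s + 1 form an unfounded set, because a static law deriving one
  of them needs another new literal in its body. Hence every action possible at s + 1
  is possible at s. No nocc atom at s is supported either, so an action occurring at
  s + 1 would be possible at s and the choice rule would make it occur at s. Induction
  on the step concludes.\<close>

definition unfounded :: "'at rule set \<Rightarrow> 'at set \<Rightarrow> 'at set \<Rightarrow> bool" where
  "unfounded \<Pi> S R \<longleftrightarrow>
     (\<forall>h B C. (Some h, B, C) \<in> \<Pi> \<and> C \<inter> S = {} \<and> h \<in> R \<longrightarrow> \<not> B \<subseteq> S - R)"

lemma answer_set_rule_closed:
  assumes "answer_set \<Pi> S" "(Some h, B, C) \<in> \<Pi>" "C \<inter> S = {}" "B \<subseteq> S"
  shows "h \<in> S"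
  using assms unfolding answer_set_def closed_rules_def reduct_def by blast

lemma answer_set_unfounded_disjoint:
  assumes S: "answer_set \<Pi> S" and R: "unfounded \<Pi> S R"
  shows "S \<inter> R = {}"
proof -
  have "closed_rules (reduct \<Pi> S) (S - R)"
    unfolding closed_rules_def reduct_def
    using answer_set_rule_closed[OF S] R unfolding unfounded_def by blast
  then have "S \<subseteq> S - R"
    using S unfolding answer_set_def by blast
  then show ?thesis by blast
qed

lemma answer_set_supported:
  assumes S: "answer_set \<Pi> S" and h: "h \<in> S"
  obtains B C where "(Some h, B, C) \<in> \<Pi>" "B \<subseteq> S" "C \<inter> S = {}"
proof -
  have "\<not> unfounded \<Pi> S {h}"
    using answer_set_unfounded_disjoint[OF S] h by blast
  then show ?thesis
    using that unfolding unfounded_def by blast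
qed

lemma pi_prog_rule_Holds_Suc:
  assumes "(Some (Holds l (Suc s)), B, C) \<in> pi_prog D \<Gamma> n"
  shows "(\<exists>a P. (a, l, P) \<in> dynamic D \<and> B = {Occ a s, Possible a s} \<union> (\<lambda>p. Holds p s) ` P)
    \<or> (\<exists>P. (P, l) \<in> static D \<and> B = (\<lambda>p. Holds p (Suc s)) ` P)
    \<or> B = {Holds l s}"
  using assms unfolding pi_prog_def by auto

lemma pi_prog_rule_Possible:
  assumes "(Some (Possible a s), B, C) \<in> pi_prog D \<Gamma> n"
  obtains P where "(a, P) \<in> exec D" "B = (\<lambda>p. Holds p s) ` P"
  using assms unfolding pi_prog_def by auto

lemma pi_prog_rule_Occ:
  assumes "(Some (Occ a s), B, C) \<in> pi_prog D \<Gamma> n"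
  shows "B = {Possible a s}"
  using assms unfolding pi_prog_def by auto

lemma pi_prog_rule_Nocc:
  assumes "(Some (Nocc a s), B, C) \<in> pi_prog D \<Gamma> n"
  obtains b where "B = {Occ b s}"
  using assms unfolding pi_prog_def by auto

lemma pi_prog_static_rule:
  "(P, l) \<in> static D \<Longrightarrow> s \<le> n \<Longrightarrow> (Some (Holds l s), (\<lambda>p. Holds p s) ` P, {}) \<in> pi_prog D \<Gamma> n"
  unfolding pi_prog_def by (simp; blast)

lemma pi_prog_exec_rule:
  "(a, P) \<in> exec D \<Longrightarrow> s \<le> n \<Longrightarrow> (Some (Possible a s), (\<lambda>p. Holds p s) ` P, {}) \<in> pi_prog D \<Gamma> n"
  unfolding pi_prog_def by (simp; blast)

lemma pi_prog_occ_rule: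
  "s \<le> n \<Longrightarrow> (Some (Occ a s), {Possible a s}, {Nocc a s}) \<in> pi_prog D \<Gamma> n"
  unfolding pi_prog_def by simp

context
  fixes D :: "('f, 'a) domain" and \<Gamma> n X s
  assumes X: "answer_set (pi_prog D \<Gamma> n) X"
    and s: "s < n"
    and no_occ: "\<forall>a. Occ a s \<notin> X"
begin

lemma holds_Suc_imp_holds_if_no_occ:
  assumes "Holds l (Suc s) \<in> X"
  shows "Holds l s \<in> X"
proof -
  let ?R = "{Holds k (Suc s) | k. Holds k s \<notin> X}"
  have "unfounded (pi_prog D \<Gamma> n) X ?R"
    unfolding unfounded_def
  proof (intro allI impI notI, elim conjE)
    fix h B C
    assume rule: "(Some h, B, C) \<in> pi_prog D \<Gamma> n" and "h \<in> ?R" and B: "B \<subseteq> X - ?R"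
    then obtain k where h: "h = Holds k (Suc s)" and k: "Holds k s \<notin> X" by blast
    from pi_prog_rule_Holds_Suc[OF rule[unfolded h]] show False
    proof (elim disjE exE conjE)
      fix a P assume "B = {Occ a s, Possible a s} \<union> (\<lambda>p. Holds p s) ` P"
      with B no_occ show False by blast
    next
      fix P assume P: "(P, k) \<in> static D" "B = (\<lambda>p. Holds p (Suc s)) ` P"
      then have "(\<lambda>p. Holds p s) ` P \<subseteq> X"
        using B by blast
      then have "Holds k s \<in> X"
        using s by (intro answer_set_rule_closed[OF X pi_prog_static_rule[OF P(1)]]) auto
      with k show False ..
    next
      assume "B = {Holds k s}"
      with B k show False by blast
    qed
  qed
  then show ?thesis
    using answer_set_unfounded_disjoint[OF X] assms by blast
qed

lemma possible_Suc_imp_possible_if_no_occ: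
  assumes "Possible a (Suc s) \<in> X"
  shows "Possible a s \<in> X"
proof -
  obtain B C where rule: "(Some (Possible a (Suc s)), B, C) \<in> pi_prog D \<Gamma> n" and B: "B \<subseteq> X"
    using answer_set_supported[OF X assms] .
  obtain P where P: "(a, P) \<in> exec D" and "B = (\<lambda>p. Holds p (Suc s)) ` P"
    using pi_prog_rule_Possible[OF rule] .
  with B have "(\<lambda>p. Holds p s) ` P \<subseteq> X"
    using holds_Suc_imp_holds_if_no_occ by blast
  then show ?thesis
    using s by (intro answer_set_rule_closed[OF X pi_prog_exec_rule[OF P]]) auto
qed

lemma nocc_notin_if_no_occ: "Nocc a s \<notin> X"
proof
  assume "Nocc a s \<in> X"
  then obtain B C where rule: "(Some (Nocc a s), B, C) \<in> pi_prog D \<Gamma> n" and B: "B \<subseteq> X"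
    by (rule answer_set_supported[OF X])
  obtain b where "B = {Occ b s}"
    using pi_prog_rule_Nocc[OF rule] .
  with B no_occ show False by blast
qed

lemma no_occ_Suc: "Occ a (Suc s) \<notin> X"
proof
  assume "Occ a (Suc s) \<in> X"
  then obtain B C where rule: "(Some (Occ a (Suc s)), B, C) \<in> pi_prog D \<Gamma> n" and B: "B \<subseteq> X"
    by (rule answer_set_supported[OF X])
  from B have "Possible a s \<in> X"
    unfolding pi_prog_rule_Occ[OF rule] by (simp add: possible_Suc_imp_possible_if_no_occ)
  then have "Occ a s \<in> X"
    using s nocc_notin_if_no_occ by (intro answer_set_rule_closed[OF X pi_prog_occ_rule]) auto
  with no_occ show False by blast
qed

end

theorem mainTheorem7:
  fixes D :: "('f::finite, 'a::finite) domain"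
    and \<Gamma> :: "'f lit set"
    and n t :: nat
    and X :: "('f, 'a) atom set"
  assumes "consistent_theory D \<Gamma>"
    and "answer_set (pi_prog D \<Gamma> n) X"
    and "t \<le> n"
    and "\<forall>a. Occ a t \<notin> X"
  shows "\<forall>t' a. t \<le> t' \<and> t' \<le> n \<longrightarrow> Occ a t' \<notin> X"
proof (intro allI impI, elim conjE)
  fix t' a
  assume "t \<le> t'" "t' \<le> n"
  then show "Occ a t' \<notin> X"
  proof (induction t' arbitrary: a rule: dec_induct)
    case base
    then show ?case using assms(4) by blast
  next
    case (step s)
    then show ?case using no_occ_Suc[OF assms(2)] by simp
  qed
qed

end
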